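(* Let $\mathcal{S}\subset\mathbb{R}_{\ge0}$ be measurable with positive Lebesgue measure, let $G_1,\dots,G_K$ be probability distributions on $\mathbb{R}$, and let $\mathcal{G}=\mathrm{ConvexHull}(G_1,\dots,G_K)=\{\sum_{j=1}^K\pi_jG_j:\pi_j\ge0,\sum_j\pi_j=1\}$. Then $$\mathrm{Tilt}[\mathcal{G}]=\mathrm{ConvexHull}(\mathrm{Tilt}[G_1],\dots,\mathrm{Tilt}[G_K]).$$
   Context: $\varphi(z;\mu)$ is the $\mathrm{N}(\mu,1)$ density, $\varphi^{\mathrm{fold}}(z;\mu)=\varphi(z;\mu)+\varphi(-z;\mu)$, $\Phi(\mathcal{S};\mu)=\int_{\mathcal{S}}\varphi^{\mathrm{fold}}(z;\mu)dz$, $\mathrm{Tilt}[G](d\mu)=\frac{\Phi(\mathcal{S};\mu)G(d\mu)}{\int\Phi(\mathcal{S};\mu')G(d\mu')}$, and $\mathrm{Tilt}[\mathcal{G}]=\{\mathrm{Tilt}[G]:G\in\mathcal{G}\}$. *)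

theory Defs
  imports "HOL-Probability.Probability"
begin

definition phi_fold :: "real \<Rightarrow> real \<Rightarrow> real" where
  "phi_fold z \<mu> = normal_density \<mu> 1 z + normal_density \<mu> 1 (- z)"

definition Phi_sel :: "real set \<Rightarrow> real \<Rightarrow> real" where
  "Phi_sel S \<mu> = (LINT z:S|lebesgue. phi_fold z \<mu>)"

definition Tilt :: "real set \<Rightarrow> real measure \<Rightarrow> real measure" where
  "Tilt S G = density G (\<lambda>\<mu>. ennreal (Phi_sel S \<mu> / (\<integral>\<mu>'. Phi_sel S \<mu>' \<partial>G)))"

definition ConvHull :: "(nat \<Rightarrow> real measure) \<Rightarrow> nat \<Rightarrow> real measure set" where
  "ConvHull G K = {N. sets N = sets borel \<and>
     (\<exists>\<pi>::nat \<Rightarrow> real. (\<forall>j<K. \<pi> j \<ge> 0) \<and> (\<Sum>j<K. \<pi> j) = 1 \<and>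
        (\<forall>A\<in>sets borel. emeasure N A = (\<Sum>j<K. ennreal (\<pi> j) * emeasure (G j) A)))}"

end

theory Submission
  imports Defs
begin

(* Write c_j for the integral of Phi(S;mu) against G_j. Before normalisation tilting is
   linear in G, so the tilt of sum_j pi_j G_j is the mixture of the Tilt[G_j] with weights
   pi_j c_j / sum_k pi_k c_k. This reweighting maps the probability simplex onto itself,
   its inverse being the reweighting by the 1/c_j, hence Tilt maps the convex hull of the
   G_j onto the convex hull of the Tilt[G_j]. *)

lemma phi_fold_pos: "0 < phi_fold z \<mu>"
  unfolding phi_fold_def by (intro add_pos_pos normal_density_pos) auto

lemma phi_fold_eq: "phi_fold z \<mu> = normal_density \<mu> 1 z + normal_density (- \<mu>) 1 z"
  unfolding phi_fold_def normal_density_def by (simp add: power2_eq_square algebra_simps)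

lemma borel_measurable_phi_fold:
  "(\<lambda>p. phi_fold (fst p) (snd p)) \<in> borel_measurable (borel \<Otimes>\<^sub>M borel)"
  unfolding phi_fold_def normal_density_def by measurable

lemma integrable_phi_fold: "integrable lebesgue (\<lambda>z. phi_fold z \<mu>)"
proof -
  have "integrable lborel (\<lambda>z. phi_fold z \<mu>)"
    unfolding phi_fold_eq by (intro Bochner_Integration.integrable_add) auto
  then show ?thesis
    by (subst integrable_completion) (auto simp: phi_fold_def)
qed

lemma integral_phi_fold: "(\<integral>z. phi_fold z \<mu> \<partial>lebesgue) = 2"
proof -
  have "(\<integral>z. phi_fold z \<mu> \<partial>lebesgue) = (\<integral>z. phi_fold z \<mu> \<partial>lborel)"
    by (rule integral_completion) (auto simp: phi_fold_def)
  also have "\<dots> = 2"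
    unfolding phi_fold_eq by (subst Bochner_Integration.integral_add) auto
  finally show ?thesis .
qed

lemma Phi_sel_nonneg: "0 \<le> Phi_sel S \<mu>"
  unfolding Phi_sel_def set_lebesgue_integral_def
  using phi_fold_pos by (intro Bochner_Integration.integral_nonneg) (simp add: less_imp_le)

lemma Phi_sel_le_2:
  assumes "S \<in> sets lebesgue"
  shows "Phi_sel S \<mu> \<le> 2"
proof -
  have "Phi_sel S \<mu> \<le> (\<integral>z. phi_fold z \<mu> \<partial>lebesgue)"
    unfolding Phi_sel_def set_lebesgue_integral_def
    using assms integrable_phi_fold phi_fold_pos
    by (intro integral_mono integrable_mult_indicator) (auto simp: indicator_def less_imp_le)
  then show ?thesis
    by (simp add: integral_phi_fold)
qed

lemma Phi_sel_pos:
  assumes "S \<in> sets lebesgue" and "emeasure lebesgue S > 0"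
  shows "0 < Phi_sel S \<mu>"
proof -
  have "S \<notin> null_sets lebesgue"
    using assms by (simp add: null_sets_def)
  then have "Phi_sel S \<mu> \<noteq> 0"
    using null_if_pos_func_has_zero_int[OF integrable_phi_fold assms(1)] phi_fold_pos
    unfolding Phi_sel_def by auto
  then show ?thesis
    using Phi_sel_nonneg by (simp add: less_le)
qed

lemma sigma_finite_lebesgue: "sigma_finite_measure (lebesgue :: 'a::euclidean_space measure)"
proof
  obtain A :: "'a set set" where "countable A" "A \<subseteq> sets lborel" "\<Union>A = space lborel"
    "\<forall>a\<in>A. emeasure lborel a \<noteq> \<infinity>"
    using lborel.sigma_finite_countable by blast
  then show "\<exists>A. countable A \<and> A \<subseteq> sets (lebesgue :: 'a measure) \<and> \<Union>A = space lebesgue \<and>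
      (\<forall>a\<in>A. emeasure lebesgue a \<noteq> \<infinity>)"
    by (intro exI[of _ A]) (auto simp: emeasure_completion)
qed

lemma borel_measurable_Phi_sel:
  assumes "S \<in> sets lebesgue" and "sets M = sets borel"
  shows "Phi_sel S \<in> borel_measurable M"
proof -
  interpret lebesgue: sigma_finite_measure "lebesgue :: real measure"
    by (rule sigma_finite_lebesgue)
  have swap: "(\<lambda>p. (snd p, fst p)) \<in> borel \<Otimes>\<^sub>M lebesgue \<rightarrow>\<^sub>M borel \<Otimes>\<^sub>M borel"
    by (intro measurable_Pair measurable_compose[OF measurable_snd] measurable_fst)
       (auto intro: measurable_completion)
  have "(\<lambda>p. indicator S (snd p) *\<^sub>R phi_fold (snd p) (fst p))
      \<in> borel_measurable (borel \<Otimes>\<^sub>M lebesgue)"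
    using measurable_comp[OF swap borel_measurable_phi_fold] assms(1)
    by (intro borel_measurable_scaleR measurable_compose[OF measurable_snd]) (auto simp: o_def)
  then have "Phi_sel S \<in> borel_measurable borel"
    unfolding Phi_sel_def set_lebesgue_integral_def
    by (intro lebesgue.borel_measurable_lebesgue_integral
        [where f="\<lambda>\<mu> z. indicator S z *\<^sub>R phi_fold z \<mu>"]) auto
  then show ?thesis
    by (simp add: measurable_cong_sets[OF assms(2) refl])
qed

definition mixture ::
  "'a measure \<Rightarrow> 'i set \<Rightarrow> ('i \<Rightarrow> ennreal) \<Rightarrow> ('i \<Rightarrow> 'a measure) \<Rightarrow> 'a measure" where
  "mixture \<Omega> I w M = measure_of (space \<Omega>) (sets \<Omega>) (\<lambda>A. \<Sum>i\<in>I. w i * emeasure (M i) A)"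

lemma sets_mixture[simp]: "sets (mixture \<Omega> I w M) = sets \<Omega>"
  unfolding mixture_def by (rule sets.sets_measure_of_eq)

lemma emeasure_mixture:
  fixes \<Omega> :: "'a measure" and M :: "'i \<Rightarrow> 'a measure"
  assumes sets_M: "\<And>i. i \<in> I \<Longrightarrow> sets (M i) = sets \<Omega>" and A: "A \<in> sets \<Omega>"
  shows "emeasure (mixture \<Omega> I w M) A = (\<Sum>i\<in>I. w i * emeasure (M i) A)"
  unfolding mixture_def
proof (rule emeasure_measure_of_sigma)
  show "countably_additive (sets \<Omega>) (\<lambda>A. \<Sum>i\<in>I. w i * emeasure (M i) A)"
  proof (rule countably_additiveI)
    fix F :: "nat \<Rightarrow> 'a set"
    assume F: "range F \<subseteq> sets \<Omega>" "disjoint_family F"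
    have "(\<Sum>n. \<Sum>i\<in>I. w i * emeasure (M i) (F n)) =
        (\<Sum>i\<in>I. w i * (\<Sum>n. emeasure (M i) (F n)))"
      by (subst suminf_sum) auto
    also have "\<dots> = (\<Sum>i\<in>I. w i * emeasure (M i) (\<Union>n. F n))"
      using F sets_M by (intro sum.cong refl arg_cong2[where f="(*)"] suminf_emeasure) auto
    finally show "(\<Sum>n. \<Sum>i\<in>I. w i * emeasure (M i) (F n)) =
        (\<Sum>i\<in>I. w i * emeasure (M i) (\<Union>n. F n))" .
  qed
qed (use A in \<open>auto simp: positive_def sets.sigma_algebra_axioms\<close>)

lemma nn_integral_mixture:
  assumes sets_M: "\<And>i. i \<in> I \<Longrightarrow> sets (M i) = sets N"
    and emeasure_N: "\<And>A. A \<in> sets N \<Longrightarrow> emeasure N A = (\<Sum>i\<in>I. w i * emeasure (M i) A)"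
    and f: "f \<in> borel_measurable N"
  shows "(\<integral>\<^sup>+x. f x \<partial>N) = (\<Sum>i\<in>I. w i * (\<integral>\<^sup>+x. f x \<partial>M i))"
proof -
  have meas: "g \<in> borel_measurable (M i)" if "g \<in> borel_measurable N" "i \<in> I" for g i
    using that by (simp add: measurable_cong_sets[OF sets_M refl])
  have space: "space (M i) = space N" if "i \<in> I" for i
    using sets_M[OF that] by (rule sets_eq_imp_space_eq)
  from f show ?thesis
  proof (induction rule: borel_measurable_induct)
    case (cong f g)
    have "(\<integral>\<^sup>+x. f x \<partial>N) = (\<integral>\<^sup>+x. g x \<partial>N)"
      using cong by (intro nn_integral_cong) simp
    moreover have "(\<integral>\<^sup>+x. f x \<partial>M i) = (\<integral>\<^sup>+x. g x \<partial>M i)" if "i \<in> I" for i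
      using cong that by (intro nn_integral_cong) (simp add: space)
    ultimately show ?case
      using cong by simp
  next
    case (set A)
    then show ?case
      by (simp add: emeasure_N sets_M)
  next
    case (mult u c)
    then show ?case
      by (simp add: nn_integral_cmult meas sum_distrib_left mult.left_commute cong: sum.cong)
  next
    case (add u v)
    then show ?case
      by (simp add: nn_integral_add meas sum.distrib distrib_left cong: sum.cong)
  next
    case (seq U)
    have "(\<integral>\<^sup>+x. (SUP n. U n) x \<partial>N) = (SUP n. \<integral>\<^sup>+x. U n x \<partial>N)"
      using seq by (simp add: nn_integral_monotone_convergence_SUP image_comp)
    also have "\<dots> = (SUP n. \<Sum>i\<in>I. w i * (\<integral>\<^sup>+x. U n x \<partial>M i))"
      using seq by simp
    also have "\<dots> = (\<Sum>i\<in>I. SUP n. w i * (\<integral>\<^sup>+x. U n x \<partial>M i))"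
      using \<open>incseq U\<close>
      by (intro ennreal_SUP_sum)
        (auto simp: incseq_def le_fun_def intro!: mult_left_mono nn_integral_mono)
    also have "\<dots> = (\<Sum>i\<in>I. w i * (\<integral>\<^sup>+x. (SUP n. U n) x \<partial>M i))"
    proof (intro sum.cong refl)
      fix i assume "i \<in> I"
      then have "(\<integral>\<^sup>+x. (SUP n. U n x) \<partial>M i) = (SUP n. \<integral>\<^sup>+x. U n x \<partial>M i)"
        using seq by (intro nn_integral_monotone_convergence_SUP meas) auto
      then show "(SUP n. w i * (\<integral>\<^sup>+x. U n x \<partial>M i)) = w i * (\<integral>\<^sup>+x. (SUP n. U n) x \<partial>M i)"
        by (simp add: SUP_mult_left_ennreal image_comp)
    qed
    finally show ?case .
  qed
qed

definition prob_simplex :: "nat \<Rightarrow> (nat \<Rightarrow> real) set" where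
  "prob_simplex K = {\<pi>. (\<forall>j<K. 0 \<le> \<pi> j) \<and> (\<Sum>j<K. \<pi> j) = 1}"

definition reweight :: "nat \<Rightarrow> (nat \<Rightarrow> real) \<Rightarrow> (nat \<Rightarrow> real) \<Rightarrow> nat \<Rightarrow> real" where
  "reweight K c \<pi> j = \<pi> j * c j / (\<Sum>k<K. \<pi> k * c k)"

lemma weighted_sum_pos:
  assumes "\<pi> \<in> prob_simplex K" and "\<And>j. j < K \<Longrightarrow> 0 < c j"
  shows "0 < (\<Sum>j<K. \<pi> j * c j)"
proof -
  have "\<exists>j<K. \<pi> j \<noteq> 0"
  proof (rule ccontr)
    assume "\<not> (\<exists>j<K. \<pi> j \<noteq> 0)"
    then have "(\<Sum>j<K. \<pi> j) = 0"
      by simp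
    with assms(1) show False
      by (simp add: prob_simplex_def)
  qed
  then obtain j where "j < K" "0 < \<pi> j"
    using assms(1) by (auto simp: prob_simplex_def less_le)
  then show ?thesis
    using assms by (intro sum_pos2[of "{..<K}" j])
      (auto simp: prob_simplex_def intro: mult_nonneg_nonneg less_imp_le)
qed

lemma reweight_in_prob_simplex:
  assumes "\<pi> \<in> prob_simplex K" and "\<And>j. j < K \<Longrightarrow> 0 < c j"
  shows "reweight K c \<pi> \<in> prob_simplex K"
proof -
  have "0 < (\<Sum>k<K. \<pi> k * c k)"
    using assms by (rule weighted_sum_pos)
  then show ?thesis
    using assms
    by (auto simp: prob_simplex_def reweight_def sum_divide_distrib[symmetric] less_imp_le
        intro!: divide_nonneg_pos mult_nonneg_nonneg)
qed

lemma reweight_reweight_inverse: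
  assumes "\<rho> \<in> prob_simplex K" and "\<And>j. j < K \<Longrightarrow> 0 < c j" and "j < K"
  shows "reweight K c (reweight K (\<lambda>j. 1 / c j) \<rho>) j = \<rho> j"
proof -
  define s where "s = (\<Sum>k<K. \<rho> k * (1 / c k))"
  have "0 < s"
    unfolding s_def using assms by (intro weighted_sum_pos) auto
  have "reweight K (\<lambda>j. 1 / c j) \<rho> k * c k = \<rho> k / s" if "k < K" for k
    using assms(2)[OF that] by (simp add: reweight_def s_def)
  then have "reweight K c (reweight K (\<lambda>j. 1 / c j) \<rho>) j = (\<rho> j / s) / (\<Sum>k<K. \<rho> k / s)"
    using assms(3) by (simp add: reweight_def)
  also have "\<dots> = \<rho> j"
    using \<open>0 < s\<close> assms(1) by (simp add: prob_simplex_def sum_divide_distrib[symmetric])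
  finally show ?thesis .
qed

definition Phi_mean :: "real set \<Rightarrow> real measure \<Rightarrow> real" where
  "Phi_mean S M = (\<integral>\<mu>. Phi_sel S \<mu> \<partial>M)"

lemma Phi_mean_nonneg: "0 \<le> Phi_mean S M"
  unfolding Phi_mean_def using Phi_sel_nonneg by (rule Bochner_Integration.integral_nonneg)

lemma integrable_Phi_sel:
  assumes "S \<in> sets lebesgue" and "finite_measure M" and "sets M = sets borel"
  shows "integrable M (Phi_sel S)"
proof -
  interpret finite_measure M
    by (fact assms(2))
  show ?thesis
    using assms Phi_sel_le_2 Phi_sel_nonneg
    by (intro integrable_const_bound[where B=2] borel_measurable_Phi_sel) auto
qed

lemma nn_integral_Phi_sel:
  assumes "S \<in> sets lebesgue" and "finite_measure M" and "sets M = sets borel"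
  shows "(\<integral>\<^sup>+\<mu>. ennreal (Phi_sel S \<mu>) \<partial>M) = ennreal (Phi_mean S M)"
  unfolding Phi_mean_def
  using integrable_Phi_sel[OF assms] Phi_sel_nonneg by (intro nn_integral_eq_integral) auto

lemma Phi_mean_pos:
  assumes "S \<in> sets lebesgue" and "emeasure lebesgue S > 0"
    and "prob_space M" and "sets M = sets borel"
  shows "0 < Phi_mean S M"
proof -
  interpret prob_space M
    by (fact assms(3))
  have "space M \<notin> null_sets M"
    by (simp add: null_sets_def emeasure_space_1)
  then have "Phi_mean S M \<noteq> 0"
    using null_if_pos_func_has_zero_int[of M "Phi_sel S" "space M"] assms
      integrable_Phi_sel[OF assms(1) finite_measure_axioms assms(4)] Phi_sel_pos
    by (auto simp: Phi_mean_def set_integral_space)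
  then show ?thesis
    using Phi_sel_nonneg by (simp add: Phi_mean_def less_le)
qed

lemma emeasure_Tilt:
  assumes "S \<in> sets lebesgue" and "sets M = sets borel" and "A \<in> sets borel"
    and "0 < Phi_mean S M"
  shows "ennreal (Phi_mean S M) * emeasure (Tilt S M) A = (\<integral>\<^sup>+\<mu>\<in>A. ennreal (Phi_sel S \<mu>) \<partial>M)"
proof -
  let ?c = "Phi_mean S M"
  have [measurable]: "Phi_sel S \<in> borel_measurable M" "A \<in> sets M"
    using assms by (auto intro: borel_measurable_Phi_sel)
  have "emeasure (Tilt S M) A = (\<integral>\<^sup>+\<mu>\<in>A. ennreal (Phi_sel S \<mu> / ?c) \<partial>M)"
    unfolding Tilt_def Phi_mean_def[symmetric] by (rule emeasure_density) measurable
  also have "ennreal ?c * \<dots> = (\<integral>\<^sup>+\<mu>\<in>A. ennreal ?c * ennreal (Phi_sel S \<mu> / ?c) \<partial>M)"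
    by (subst nn_integral_cmult[symmetric]) (simp_all add: mult.assoc)
  also have "\<dots> = (\<integral>\<^sup>+\<mu>\<in>A. ennreal (Phi_sel S \<mu>) \<partial>M)"
    using assms(4) Phi_sel_nonneg by (simp add: ennreal_mult[symmetric])
  finally show ?thesis .
qed

lemma Phi_mean_mixture:
  assumes S: "S \<in> sets lebesgue"
    and G: "\<And>j. j < K \<Longrightarrow> finite_measure (G j)" "\<And>j. j < K \<Longrightarrow> sets (G j) = sets borel"
    and N: "sets N = sets borel"
      "\<And>A. A \<in> sets borel \<Longrightarrow> emeasure N A = (\<Sum>j<K. ennreal (\<pi> j) * emeasure (G j) A)"
    and \<pi>: "\<And>j. j < K \<Longrightarrow> 0 \<le> \<pi> j"
  shows "Phi_mean S N = (\<Sum>j<K. \<pi> j * Phi_mean S (G j))"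
proof -
  have "Phi_mean S N = enn2real (\<integral>\<^sup>+\<mu>. ennreal (Phi_sel S \<mu>) \<partial>N)"
    unfolding Phi_mean_def using S N(1) Phi_sel_nonneg
    by (intro integral_eq_nn_integral borel_measurable_Phi_sel) auto
  also have "(\<integral>\<^sup>+\<mu>. ennreal (Phi_sel S \<mu>) \<partial>N) =
      (\<Sum>j<K. ennreal (\<pi> j) * (\<integral>\<^sup>+\<mu>. ennreal (Phi_sel S \<mu>) \<partial>G j))"
    using S N G
    by (intro nn_integral_mixture measurable_compose[OF borel_measurable_Phi_sel measurable_ennreal])
      auto
  also have "\<dots> = (\<Sum>j<K. ennreal (\<pi> j * Phi_mean S (G j)))"
    using S G \<pi>
    by (intro sum.cong refl) (simp add: nn_integral_Phi_sel ennreal_mult Phi_mean_nonneg)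
  also have "\<dots> = ennreal (\<Sum>j<K. \<pi> j * Phi_mean S (G j))"
    using \<pi> Phi_mean_nonneg by (intro sum_ennreal mult_nonneg_nonneg) auto
  finally have "Phi_mean S N = enn2real (ennreal (\<Sum>j<K. \<pi> j * Phi_mean S (G j)))" .
  moreover have "0 \<le> (\<Sum>j<K. \<pi> j * Phi_mean S (G j))"
    using \<pi> by (intro sum_nonneg mult_nonneg_nonneg Phi_mean_nonneg) auto
  ultimately show ?thesis
    by simp
qed

context
  fixes S :: "real set" and G :: "nat \<Rightarrow> real measure" and K :: nat
  assumes S: "S \<in> sets lebesgue" "emeasure lebesgue S > 0"
    and G: "\<And>j. j < K \<Longrightarrow> prob_space (G j)" "\<And>j. j < K \<Longrightarrow> sets (G j) = sets borel"
begin

lemma Phi_mean_component_pos: "j < K \<Longrightarrow> 0 < Phi_mean S (G j)"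
  using S G by (intro Phi_mean_pos) auto

lemma emeasure_Tilt_mixture:
  assumes N: "sets N = sets borel"
      "\<And>A. A \<in> sets borel \<Longrightarrow> emeasure N A = (\<Sum>j<K. ennreal (\<pi> j) * emeasure (G j) A)"
    and \<pi>: "\<pi> \<in> prob_simplex K"
    and A: "A \<in> sets borel"
  shows "emeasure (Tilt S N) A =
    (\<Sum>j<K. ennreal (reweight K (\<lambda>j. Phi_mean S (G j)) \<pi> j) * emeasure (Tilt S (G j)) A)"
proof -
  define c where "c = (\<lambda>j. Phi_mean S (G j))"
  have \<pi>_nonneg: "0 \<le> \<pi> j" if "j < K" for j
    using \<pi> that by (simp add: prob_simplex_def)
  have cN: "Phi_mean S N = (\<Sum>j<K. \<pi> j * c j)"
    unfolding c_def using S G N \<pi>_nonneg by (intro Phi_mean_mixture prob_space.finite_measure) auto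
  have cN_pos: "0 < Phi_mean S N"
    unfolding cN c_def using \<pi> Phi_mean_component_pos by (rule weighted_sum_pos)
  have "ennreal (Phi_mean S N) * emeasure (Tilt S N) A = (\<integral>\<^sup>+\<mu>\<in>A. ennreal (Phi_sel S \<mu>) \<partial>N)"
    using S N A cN_pos by (intro emeasure_Tilt) auto
  also have "\<dots> = (\<Sum>j<K. ennreal (\<pi> j) * (\<integral>\<^sup>+\<mu>\<in>A. ennreal (Phi_sel S \<mu>) \<partial>G j))"
    using S N G A
    by (intro nn_integral_mixture borel_measurable_times_ennreal borel_measurable_indicator
        measurable_compose[OF borel_measurable_Phi_sel measurable_ennreal]) auto
  also have "\<dots> = (\<Sum>j<K. ennreal (\<pi> j) * (ennreal (c j) * emeasure (Tilt S (G j)) A))"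
    unfolding c_def using S G A Phi_mean_component_pos
    by (intro sum.cong refl) (simp add: emeasure_Tilt)
  also have "\<dots> = ennreal (Phi_mean S N) *
      (\<Sum>j<K. ennreal (reweight K c \<pi> j) * emeasure (Tilt S (G j)) A)"
    unfolding sum_distrib_left
  proof (intro sum.cong refl)
    fix j assume "j \<in> {..<K}"
    then have "ennreal (\<pi> j) * ennreal (c j) = ennreal (Phi_mean S N) * ennreal (reweight K c \<pi> j)"
      using \<pi>_nonneg Phi_mean_component_pos cN_pos
      by (simp add: ennreal_mult[symmetric] reweight_def cN c_def less_imp_le
          divide_nonneg_pos mult_nonneg_nonneg)
    then show "ennreal (\<pi> j) * (ennreal (c j) * emeasure (Tilt S (G j)) A) =
        ennreal (Phi_mean S N) * (ennreal (reweight K c \<pi> j) * emeasure (Tilt S (G j)) A)"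
      by (simp add: mult.assoc[symmetric])
  qed
  finally show ?thesis
    using cN_pos by (simp add: ennreal_mult_cancel_left c_def)
qed

lemma Tilt_ConvHull_subset: "Tilt S ` ConvHull G K \<subseteq> ConvHull (\<lambda>j. Tilt S (G j)) K"
proof
  fix M assume "M \<in> Tilt S ` ConvHull G K"
  then obtain N \<pi> where M: "M = Tilt S N" and N: "sets N = sets borel" and \<pi>: "\<pi> \<in> prob_simplex K"
    and mix: "\<And>A. A \<in> sets borel \<Longrightarrow> emeasure N A = (\<Sum>j<K. ennreal (\<pi> j) * emeasure (G j) A)"
    by (auto simp: ConvHull_def prob_simplex_def)
  have "reweight K (\<lambda>j. Phi_mean S (G j)) \<pi> \<in> prob_simplex K"
    using \<pi> Phi_mean_component_pos by (rule reweight_in_prob_simplex)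
  then show "M \<in> ConvHull (\<lambda>j. Tilt S (G j)) K"
    using emeasure_Tilt_mixture[OF N mix \<pi>] N
    by (auto simp: ConvHull_def prob_simplex_def M Tilt_def)
qed

lemma ConvHull_Tilt_subset: "ConvHull (\<lambda>j. Tilt S (G j)) K \<subseteq> Tilt S ` ConvHull G K"
proof
  let ?c = "\<lambda>j. Phi_mean S (G j)"
  fix M assume "M \<in> ConvHull (\<lambda>j. Tilt S (G j)) K"
  then obtain \<rho> where M: "sets M = sets borel" and \<rho>: "\<rho> \<in> prob_simplex K"
    and mix: "\<And>A. A \<in> sets borel \<Longrightarrow> emeasure M A = (\<Sum>j<K. ennreal (\<rho> j) * emeasure (Tilt S (G j)) A)"
    by (auto simp: ConvHull_def prob_simplex_def)
  define \<pi> where "\<pi> = reweight K (\<lambda>j. 1 / ?c j) \<rho>"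
  have \<pi>: "\<pi> \<in> prob_simplex K"
    unfolding \<pi>_def using \<rho> Phi_mean_component_pos by (intro reweight_in_prob_simplex) auto
  define N where "N = mixture borel {..<K} (\<lambda>j. ennreal (\<pi> j)) G"
  have N: "sets N = sets borel"
    by (simp add: N_def)
  have N_mix: "emeasure N A = (\<Sum>j<K. ennreal (\<pi> j) * emeasure (G j) A)" if "A \<in> sets borel" for A
    unfolding N_def using G that by (intro emeasure_mixture) auto
  have "Tilt S N = M"
  proof (rule measure_eqI)
    fix A assume "A \<in> sets (Tilt S N)"
    then have A: "A \<in> sets borel"
      by (simp add: N Tilt_def)
    show "emeasure (Tilt S N) A = emeasure M A"
      using emeasure_Tilt_mixture[OF N N_mix \<pi> A]
        reweight_reweight_inverse[OF \<rho> Phi_mean_component_pos]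
      by (simp add: mix[OF A] \<pi>_def)
  qed (simp add: N M Tilt_def)
  moreover have "N \<in> ConvHull G K"
    using \<pi> N N_mix by (auto simp: ConvHull_def prob_simplex_def)
  ultimately show "M \<in> Tilt S ` ConvHull G K"
    by blast
qed

end

theorem propositionS1:
  fixes S :: "real set" and G :: "nat \<Rightarrow> real measure" and K :: nat
  assumes "S \<in> sets lebesgue" and "S \<subseteq> {0..}" and "emeasure lebesgue S > 0"
    and "\<And>j. j < K \<Longrightarrow> prob_space (G j)"
    and "\<And>j. j < K \<Longrightarrow> sets (G j) = sets borel"
  shows "Tilt S ` ConvHull G K = ConvHull (\<lambda>j. Tilt S (G j)) K"
  using Tilt_ConvHull_subset[OF assms(1,3-5)] ConvHull_Tilt_subset[OF assms(1,3-5)]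
  by (rule equalityI)

end
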